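(* Suppose units arrive in $K$ sequential groups of sizes $n_1,\dots,n_K$ (each even) with $n_{tk}=n_{ck}=n_k/2$ for $k=1,\dots,K$, and the assignment $W=(W_{[1]},\dots,W_{[K]})$ is generated by sequential pair-switching rerandomization (SeqPSRR), assumed to terminate almost surely in every group. Then the difference-in-means estimator $\widehat\tau=\frac{2}{n}\sum_{i=1}^nW_iY_i(1)-\frac2n\sum_{i=1}^n(1-W_i)Y_i(0)$, $n=\sum_kn_k$, satisfies $E(\widehat\tau)=\tau=n^{-1}\sum_{i=1}^n\{Y_i(1)-Y_i(0)\}$.
   Context: Units are indexed so that group $k$ consists of units $n_{1:(k-1)}+1,\dots,n_{1:k}$, where $n_{1:k}=\sum_{l\le k}n_l$; $W_{[k]}$ is the assignment sub-vector of group $k$, with $n_{tk}$ treated and $n_{ck}$ controls. Covariates $X_i\in\mathbb R^p$ are fixed; $S_{XX[k]}$ is the (assumed invertible) sample covariance of the covariates of the first $k$ groups. With earlier groups' assignments fixed, the cumulative Mahalanobis distance of a group-$k$ assignment is $M_k(W_{[k]})=n_{t,1:k}(1-n_{t,1:k}/n_{1:k})(\overline X_{t[1:k]}-\overline X_{c[1:k]})^{\mathrm T}S_{XX[k]}^{-1}(\overline X_{t[1:k]}-\overline X_{c[1:k]})$, where $n_{t,1:k}=\sum_{l\le k}n_{tl}$ and $\overline X_{t[1:k]}$, $\overline X_{c[1:k]}$ are covariate means of treated/control units among the first $k$ groups. SeqPSRR (inputs: positive numbers $s_1,\dots,s_K$, tuning parameter $\gamma\ge0$): set $M_{[0]}=0$;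 for $k=1,\dots,K$: set $a_k=n_k(n_{1:k})^{-1}q_k$, where $q_k$ is the lower $1/s_k$ quantile of a noncentral chi-square distribution with $p$ degrees of freedom and noncentrality parameter $n_{1:(k-1)}n_k^{-1}M_{[k-1]}$; draw $W^{(0)}_{[k]}$ uniformly among group-$k$ assignments with $n_{tk}$ ones; while $M_k(W^{(t)}_{[k]})>a_k$, swap a uniformly chosen treated and a uniformly chosen control unit of group $k$ to get $W^*_{[k]}$ and move to it with probability $\min\{(M_k(W^{(t)}_{[k]})/M_k(W^*_{[k]}))^\gamma,1\}$ (otherwise retry); output the final $W_{[k]}$ and set $M_{[k]}=M_k(W_{[k]})$. *)

theory Defs
  imports "HOL-Analysis.Analysis" "HOL-Probability.Probability"
begin

text \<open>Units are indexed 0,1,2,...; groups are indexed k = 0,...,K-1 (paper: 1,...,K). An assignment is a function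
  W :: nat => bool (True = treated).\<close>

definition cum :: "(nat \<Rightarrow> nat) \<Rightarrow> nat \<Rightarrow> nat" where
  "cum ns k = (\<Sum>l<k. ns l)"

definition group :: "(nat \<Rightarrow> nat) \<Rightarrow> nat \<Rightarrow> nat set" where
  "group ns k = {cum ns k ..< cum ns (Suc k)}"

definition sample_mean :: "(nat \<Rightarrow> real^'p) \<Rightarrow> nat set \<Rightarrow> real^'p" where
  "sample_mean X A = (1 / real (card A)) *\<^sub>R (\<Sum>i\<in>A. X i)"

definition sample_cov :: "(nat \<Rightarrow> real^'p) \<Rightarrow> nat \<Rightarrow> real^'p^'p" where
  "sample_cov X m = (\<chi> a b. (1 / (real m - 1)) *
      (\<Sum>i<m. (X i $ a - sample_mean X {..<m} $ a) * (X i $ b - sample_mean X {..<m} $ b)))"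

definition mahal :: "(nat \<Rightarrow> real^'p) \<Rightarrow> nat \<Rightarrow> (nat \<Rightarrow> bool) \<Rightarrow> real" where
  "mahal X m W =
    (let nt = card {i. i < m \<and> W i};
         d = sample_mean X {i. i < m \<and> W i} - sample_mean X {i. i < m \<and> \<not> W i}
     in real nt * (1 - real nt / real m) * (d \<bullet> (matrix_inv (sample_cov X m) *v d)))"

text \<open>CDF of the noncentral chi-square distribution with p degrees of freedom and
  noncentrality lam: law of sum_{i<p} (Z_i + mu_i)^2 with Z_i iid standard normal and
  sum mu_i^2 = lam (we take mu = (sqrt lam, 0, ..., 0)).\<close>
definition nc_chisq_cdf :: "nat \<Rightarrow> real \<Rightarrow> real \<Rightarrow> real" where
  "nc_chisq_cdf p lam x =
     measure (PiM {..<p} (\<lambda>_. density lborel std_normal_density))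
       {z \<in> space (PiM {..<p} (\<lambda>_. density lborel std_normal_density)).
          (\<Sum>i<p. (z i + (if i = 0 then sqrt lam else 0))\<^sup>2) \<le> x}"

definition nc_chisq_quantile :: "nat \<Rightarrow> real \<Rightarrow> real \<Rightarrow> real" where
  "nc_chisq_quantile p lam \<alpha> = Inf {x. nc_chisq_cdf p lam x \<ge> \<alpha>}"

text \<open>Metropolis-type acceptance probability min{(M(W)/M(W*))^gamma, 1}, with the
  conventions t^0 = 1 (also for t = infinity) and c/0 = infinity for c > 0.\<close>
definition accept_prob :: "real \<Rightarrow> real \<Rightarrow> real \<Rightarrow> real" where
  "accept_prob \<gamma> m mstar =
     (if \<gamma> = 0 \<or> mstar = 0 then 1 else min ((m / mstar) powr \<gamma>) 1)"

partial_function (spmf) psrr_loop ::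
  "real \<Rightarrow> real \<Rightarrow> ((nat \<Rightarrow> bool) \<Rightarrow> real) \<Rightarrow> nat set \<Rightarrow> (nat \<Rightarrow> bool) \<Rightarrow> (nat \<Rightarrow> bool) spmf"
where
  "psrr_loop a \<gamma> M G W =
     (if M W \<le> a then return_spmf W
      else do {
        i \<leftarrow> spmf_of_set {i \<in> G. W i};
        j \<leftarrow> spmf_of_set {j \<in> G. \<not> W j};
        let W' = W(i := False, j := True);
        b \<leftarrow> spmf_of_pmf (bernoulli_pmf (accept_prob \<gamma> (M W) (M W')));
        psrr_loop a \<gamma> M G (if b then W' else W)
      })"

text \<open>SeqPSRR run on the first k groups; returns (assignment, M_[k]).
  ns = group sizes, nt = numbers of treated per group, s = the inputs s_1..s_K,
  gamma = tuning parameter.\<close>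
fun seq_psrr :: "(nat \<Rightarrow> real^'p) \<Rightarrow> (nat \<Rightarrow> nat) \<Rightarrow> (nat \<Rightarrow> nat) \<Rightarrow> (nat \<Rightarrow> real) \<Rightarrow> real
    \<Rightarrow> nat \<Rightarrow> ((nat \<Rightarrow> bool) \<times> real) spmf" where
  "seq_psrr X ns nt s \<gamma> 0 = return_spmf (\<lambda>_. False, 0)"
| "seq_psrr X ns nt s \<gamma> (Suc k) = do {
      (W, Mprev) \<leftarrow> seq_psrr X ns nt s \<gamma> k;
      let q = nc_chisq_quantile CARD('p) (real (cum ns k) / real (ns k) * Mprev) (1 / s k);
      let a = real (ns k) / real (cum ns (Suc k)) * q;
      let G = group ns k;
      T \<leftarrow> spmf_of_set {T. T \<subseteq> G \<and> card T = nt k};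
      let W0 = (\<lambda>i. if i \<in> G then i \<in> T else W i);
      W' \<leftarrow> psrr_loop a \<gamma> (mahal X (cum ns (Suc k))) G W0;
      return_spmf (W', mahal X (cum ns (Suc k)) W')
    }"

definition seqpsrr :: "(nat \<Rightarrow> real^'p) \<Rightarrow> (nat \<Rightarrow> nat) \<Rightarrow> (nat \<Rightarrow> nat) \<Rightarrow> (nat \<Rightarrow> real) \<Rightarrow> real
    \<Rightarrow> nat \<Rightarrow> (nat \<Rightarrow> bool) spmf" where
  "seqpsrr X ns nt s \<gamma> K = map_spmf fst (seq_psrr X ns nt s \<gamma> K)"

definition diff_in_means :: "nat \<Rightarrow> (nat \<Rightarrow> real) \<Rightarrow> (nat \<Rightarrow> real) \<Rightarrow> (nat \<Rightarrow> bool) \<Rightarrow> real" where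
  "diff_in_means n Y1 Y0 W =
     2 / real n * (\<Sum>i<n. (if W i then 1 else 0) * Y1 i)
     - 2 / real n * (\<Sum>i<n. (1 - (if W i then 1 else 0)) * Y0 i)"

definition ate :: "nat \<Rightarrow> (nat \<Rightarrow> real) \<Rightarrow> (nat \<Rightarrow> real) \<Rightarrow> real" where
  "ate n Y1 Y0 = (1 / real n) * (\<Sum>i<n. Y1 i - Y0 i)"

end

theory Submission
  imports Defs
begin

text \<open>Exchanging treatment and control on all units of the groups processed so far
  (the map \<open>flip_below\<close>) leaves the law of SeqPSRR unchanged: the Mahalanobis distance
  is symmetric in the two arms, complementation permutes the balanced assignments of a group
  because \<open>n\<^sub>t\<^sub>k = n\<^sub>k/2\<close>, and a pair switch of the flipped chain is the flip of a pair
  switch of the original one. Since the estimator evaluated at an assignment and at its flip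
  adds up to \<open>2\<tau>\<close>, its expectation is \<open>\<tau>\<close>.\<close>

definition flip_below :: "nat \<Rightarrow> (nat \<Rightarrow> bool) \<Rightarrow> nat \<Rightarrow> bool" where
  "flip_below m W = (\<lambda>i. if i < m then \<not> W i else W i)"

lemma flip_below_flip_below [simp]: "flip_below m (flip_below m W) = W"
  by (auto simp: flip_below_def)

lemma flip_below_0 [simp]: "flip_below 0 = id"
  by (auto simp: flip_below_def fun_eq_iff)

lemma mahal_flip_below: "mahal X m (flip_below m W) = mahal X m W"
proof -
  define A where "A = {i. i < m \<and> W i}"
  define B where "B = {i. i < m \<and> \<not> W i}"
  have treated: "{i. i < m \<and> flip_below m W i} = B" and control: "{i. i < m \<and> \<not> flip_below m W i} = A"
    by (auto simp: A_def B_def flip_below_def)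
  have "A \<union> B = {..<m}" and "A \<inter> B = {}"
    by (auto simp: A_def B_def)
  then have "card A + card B = m"
    using card_Un_disjoint[of A B] by (simp add: A_def B_def)
  then have card_factor: "real (card B) * (1 - real (card B) / real m) = real (card A) * (1 - real (card A) / real m)"
    by (cases "m = 0") (auto simp: field_simps)
  have quadratic_form: "(sample_mean X B - sample_mean X A) \<bullet> (Q *v (sample_mean X B - sample_mean X A))
      = (sample_mean X A - sample_mean X B) \<bullet> (Q *v (sample_mean X A - sample_mean X B))" for Q
    by (simp add: matrix_vector_mult_diff_distrib inner_diff_left inner_diff_right)
  show ?thesis
    unfolding mahal_def Let_def treated control A_def[symmetric] B_def[symmetric] card_factor quadratic_form ..
qed

lemma psrr_loop_flip_below_le:
  assumes M: "\<And>V. M (flip_below m V) = M V" and G: "G \<subseteq> {..<m}"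
  shows "ord_spmf (=) (map_spmf (flip_below m) (psrr_loop a \<gamma> M G W)) (psrr_loop a \<gamma> M G (flip_below m W))"
proof -
  have "\<forall>W. ord_spmf (=) (map_spmf (flip_below m) (psrr_loop a \<gamma> M G W)) (psrr_loop a \<gamma> M G (flip_below m W))"
  proof (induction rule: psrr_loop.fixp_induct)
    case 1
    show ?case by (intro admissible_all cont_intro) (simp_all add: curry_def mcont_call)
  next
    case 2
    show ?case by simp
  next
    case (3 loop)
    have treated: "{i \<in> G. flip_below m W i} = {i \<in> G. \<not> W i}"
      and control: "{i \<in> G. \<not> flip_below m W i} = {i \<in> G. W i}" for W
      using G by (auto simp: flip_below_def)
    have swap: "(flip_below m W)(j := False, i := True) = flip_below m (W(i := False, j := True))"
      if "i \<in> G" "j \<in> G" "W i" "\<not> W j" for W i j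
      using that G by (auto simp: flip_below_def fun_eq_iff)
    have step: "ord_spmf (=)
        (map_spmf (flip_below m) (spmf_of_pmf (bernoulli_pmf (accept_prob \<gamma> (M W) (M (W(i := False, j := True))))) \<bind>
           (\<lambda>b. loop a \<gamma> M G (if b then W(i := False, j := True) else W))))
        (spmf_of_pmf (bernoulli_pmf (accept_prob \<gamma> (M W) (M ((flip_below m W)(j := False, i := True))))) \<bind>
           (\<lambda>b. loop a \<gamma> M G (if b then (flip_below m W)(j := False, i := True) else flip_below m W)))"
      if "i \<in> G" "j \<in> G" "W i" "\<not> W j" for W i j
      unfolding map_spmf_bind_spmf o_def swap[OF that] M
      by (rule ord_spmf_bind_reflI) (simp add: "3.IH")
    show ?case
      apply (intro allI)
      subgoal for W
      proof (cases "M W \<le> a")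
        case True
        then show ?thesis by (simp add: M)
      next
        case False
        \<comment> \<open>In the flipped assignment the drawn treated unit is a control unit and vice versa,
          so the two uniform draws are taken in the opposite order.\<close>
        then show ?thesis
          unfolding treated control Let_def M
          apply (simp add: map_spmf_bind_spmf o_def)
          apply (subst (2) bind_commute_spmf)
          apply (intro ord_spmf_bind_reflI)
          subgoal for i j using step[of i j] by (simp add: set_spmf_of_set split: if_splits)
          done
      qed
      done
  qed
  then show ?thesis by blast
qed

lemma psrr_loop_flip_below:
  assumes M: "\<And>V. M (flip_below m V) = M V" and G: "G \<subseteq> {..<m}"
  shows "map_spmf (flip_below m) (psrr_loop a \<gamma> M G W) = psrr_loop a \<gamma> M G (flip_below m W)"
proof (rule spmf.leq_antisym)
  show "ord_spmf (=) (map_spmf (flip_below m) (psrr_loop a \<gamma> M G W)) (psrr_loop a \<gamma> M G (flip_below m W))"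
    using M G by (rule psrr_loop_flip_below_le)
  have "ord_spmf (=) (map_spmf (flip_below m) (psrr_loop a \<gamma> M G (flip_below m W))) (psrr_loop a \<gamma> M G W)"
    using psrr_loop_flip_below_le[of M m G a \<gamma> "flip_below m W"] M G by simp
  then have "ord_spmf (=) (map_spmf (flip_below m) (map_spmf (flip_below m) (psrr_loop a \<gamma> M G (flip_below m W))))
      (map_spmf (flip_below m) (psrr_loop a \<gamma> M G W))"
    unfolding ord_spmf_map_spmf12 by (rule ord_spmf_mono) simp
  then show "ord_spmf (=) (psrr_loop a \<gamma> M G (flip_below m W)) (map_spmf (flip_below m) (psrr_loop a \<gamma> M G W))"
    by (simp add: spmf.map_comp o_def)
qed

lemma map_spmf_Diff_half_subsets:
  assumes "finite G" and "card G = 2 * r"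
  shows "map_spmf (\<lambda>T. G - T) (spmf_of_set {T. T \<subseteq> G \<and> card T = r}) = spmf_of_set {T. T \<subseteq> G \<and> card T = r}"
proof -
  let ?S = "{T. T \<subseteq> G \<and> card T = r}"
  have complement: "G - T \<in> ?S" if "T \<in> ?S" for T
    using that assms by (auto simp: card_Diff_subset finite_subset)
  have "(\<lambda>T. G - T) ` ?S = ?S"
  proof
    show "(\<lambda>T. G - T) ` ?S \<subseteq> ?S"
      using complement by blast
    show "?S \<subseteq> (\<lambda>T. G - T) ` ?S"
      using complement by (auto intro!: image_eqI[where x="G - _"])
  qed
  moreover have "inj_on (\<lambda>T. G - T) ?S"
    by (rule inj_onI) auto
  ultimately show ?thesis
    by (simp add: map_spmf_of_set_inj_on)
qed

lemma cum_Suc: "cum ns (Suc k) = cum ns k + ns k"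
  unfolding cum_def by simp

lemma psrr_group_flip_below:
  assumes M: "\<And>V. M (flip_below m V) = M V" and "c \<le> m" and "m - c = 2 * r"
  shows "map_spmf (flip_below m) (spmf_of_set {T. T \<subseteq> {c..<m} \<and> card T = r} \<bind>
           (\<lambda>T. psrr_loop a \<gamma> M {c..<m} (\<lambda>i. if i \<in> {c..<m} then i \<in> T else W i)))
       = spmf_of_set {T. T \<subseteq> {c..<m} \<and> card T = r} \<bind>
           (\<lambda>T. psrr_loop a \<gamma> M {c..<m} (\<lambda>i. if i \<in> {c..<m} then i \<in> T else flip_below c W i))"
proof -
  let ?S = "spmf_of_set {T. T \<subseteq> {c..<m} \<and> card T = r}"
  let ?loop = "psrr_loop a \<gamma> M {c..<m}"
  let ?init = "\<lambda>V T i. if i \<in> {c..<m} then i \<in> T else V i"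
  have loop_flip: "map_spmf (flip_below m) (?loop V) = ?loop (flip_below m V)" for V
    by (rule psrr_loop_flip_below) (auto simp: M)
  have init: "flip_below m (?init W T) = ?init (flip_below c W) ({c..<m} - T)" if "T \<subseteq> {c..<m}" for T
    using that \<open>c \<le> m\<close> by (auto simp: flip_below_def fun_eq_iff)
  have "map_spmf (flip_below m) (?S \<bind> (\<lambda>T. ?loop (?init W T))) = ?S \<bind> (\<lambda>T. ?loop (flip_below m (?init W T)))"
    by (simp only: map_spmf_bind_spmf o_def loop_flip)
  also have "\<dots> = ?S \<bind> (\<lambda>T. ?loop (?init (flip_below c W) ({c..<m} - T)))"
    by (intro bind_spmf_cong refl arg_cong[where f = ?loop] init) (auto simp: set_spmf_of_set split: if_splits)
  also have "\<dots> = map_spmf (\<lambda>T. {c..<m} - T) ?S \<bind> (\<lambda>T. ?loop (?init (flip_below c W) T))"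
    by (simp add: bind_map_spmf o_def)
  also have "\<dots> = ?S \<bind> (\<lambda>T. ?loop (?init (flip_below c W) T))"
    using \<open>m - c = 2 * r\<close> by (simp add: map_spmf_Diff_half_subsets)
  finally show ?thesis .
qed

lemma seq_psrr_flip_below:
  fixes X :: "nat \<Rightarrow> real^'p"
  assumes "\<And>l. l < k \<Longrightarrow> ns l = 2 * nt l"
  shows "map_spmf (apfst (flip_below (cum ns k))) (seq_psrr X ns nt s \<gamma> k) = seq_psrr X ns nt s \<gamma> k"
  using assms
proof (induction k)
  case 0
  show ?case by (simp add: cum_def apfst_def map_prod_def split_def)
next
  case (Suc k)
  define c m where "c = cum ns k" and "m = cum ns (Suc k)"
  define M where "M = mahal X m"
  define thr where "thr Mp = real (ns k) / real m * nc_chisq_quantile CARD('p) (real c / real (ns k) * Mp) (1 / s k)" for Mp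
  define group_step where "group_step W Mp = map_spmf (\<lambda>W'. (W', M W'))
      (spmf_of_set {T. T \<subseteq> {c..<m} \<and> card T = nt k} \<bind>
        (\<lambda>T. psrr_loop (thr Mp) \<gamma> M {c..<m} (\<lambda>i. if i \<in> {c..<m} then i \<in> T else W i)))" for W Mp
  have seq_Suc: "seq_psrr X ns nt s \<gamma> (Suc k) = seq_psrr X ns nt s \<gamma> k \<bind> (\<lambda>(W, Mp). group_step W Mp)"
    by (simp add: group_step_def thr_def M_def m_def c_def group_def Let_def map_spmf_conv_bind_spmf split_def)
  have "c \<le> m" and "m - c = 2 * nt k"
    using Suc.prems[of k] by (simp_all add: c_def m_def cum_Suc)
  moreover have "apfst (flip_below m) \<circ> (\<lambda>W'. (W', M W')) = (\<lambda>W'. (W', M W')) \<circ> flip_below m"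
    by (simp add: fun_eq_iff M_def mahal_flip_below)
  ultimately have group_step_flip: "map_spmf (apfst (flip_below m)) (group_step W Mp) = group_step (flip_below c W) Mp" for W Mp
    unfolding group_step_def spmf.map_comp
    by (simp only: spmf.map_comp[symmetric] psrr_group_flip_below M_def mahal_flip_below)
  have "map_spmf (apfst (flip_below m)) (seq_psrr X ns nt s \<gamma> (Suc k))
      = map_spmf (apfst (flip_below c)) (seq_psrr X ns nt s \<gamma> k) \<bind> (\<lambda>(W, Mp). group_step W Mp)"
    unfolding seq_Suc map_spmf_bind_spmf o_def bind_map_spmf by (simp add: group_step_flip split_def)
  also have "\<dots> = seq_psrr X ns nt s \<gamma> k \<bind> (\<lambda>(W, Mp). group_step W Mp)"
    using Suc by (simp add: c_def)
  also have "\<dots> = seq_psrr X ns nt s \<gamma> (Suc k)"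
    by (rule seq_Suc[symmetric])
  finally show ?case by (simp add: m_def)
qed

lemma integral_measure_spmf_eq_by_symmetry:
  fixes f :: "'a \<Rightarrow> real"
  assumes "lossless_spmf p" and invariant: "map_spmf g p = p"
    and sum: "\<And>x. f x + f (g x) = 2 * c" and bounded: "\<And>x. \<bar>f x\<bar> \<le> B"
  shows "(\<integral>x. f x \<partial>measure_spmf p) = c"
proof -
  have integrable: "integrable (measure_spmf p) f" "integrable (measure_spmf p) (\<lambda>x. f (g x))"
    using bounded by (auto intro: measure_spmf.integrable_const_bound[where B = B])
  have "(\<integral>x. f x \<partial>measure_spmf p) = (\<integral>x. f x \<partial>measure_spmf (map_spmf g p))"
    by (simp add: invariant)
  also have "\<dots> = (\<integral>x. f (g x) \<partial>measure_spmf p)"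
    unfolding measure_map_spmf_conv_distr by (rule integral_distr) auto
  finally have "2 * (\<integral>x. f x \<partial>measure_spmf p) = (\<integral>x. f x + f (g x) \<partial>measure_spmf p)"
    using integrable by simp
  also have "\<dots> = 2 * c"
    using \<open>lossless_spmf p\<close> by (simp add: sum lossless_weight_spmfD weight_spmf_def[symmetric])
  finally show ?thesis by simp
qed

lemma diff_in_means_add_flip_below:
  "diff_in_means n Y1 Y0 W + diff_in_means n Y1 Y0 (flip_below n W) = 2 * ate n Y1 Y0"
proof -
  have treated: "(\<Sum>i<n. (if flip_below n W i then 1 else 0) * Y i) = (\<Sum>i<n. (1 - (if W i then 1 else 0)) * Y i)"
    and control: "(\<Sum>i<n. (1 - (if flip_below n W i then 1 else 0)) * Y i) = (\<Sum>i<n. (if W i then 1 else 0) * Y i)"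
    for Y :: "nat \<Rightarrow> real"
    by (auto intro!: sum.cong simp: flip_below_def)
  have control_total: "(\<Sum>i<n. (1 - (if W i then 1 else 0)) * Y i) = (\<Sum>i<n. Y i) - (\<Sum>i<n. (if W i then 1 else 0) * Y i)"
    for Y :: "nat \<Rightarrow> real"
    by (simp add: sum_subtractf[symmetric] algebra_simps)
  show ?thesis
    unfolding diff_in_means_def treated control control_total ate_def sum_subtractf
    by (cases "n = 0") (simp_all add: field_simps)
qed

lemma abs_diff_in_means_le: "\<bar>diff_in_means n Y1 Y0 W\<bar> \<le> 2 / real n * (\<Sum>i<n. \<bar>Y1 i\<bar> + \<bar>Y0 i\<bar>)"
proof -
  have "\<bar>(\<Sum>i<n. (if W i then 1 else 0) * Y1 i) - (\<Sum>i<n. (1 - (if W i then 1 else 0)) * Y0 i)\<bar>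
      \<le> (\<Sum>i<n. \<bar>Y1 i\<bar> + \<bar>Y0 i\<bar>)"
    unfolding sum_subtractf[symmetric] by (rule order_trans[OF sum_abs]) (rule sum_mono, auto)
  moreover have coefficient: "\<bar>2 / real n\<bar> = 2 / real n"
    by simp
  ultimately show ?thesis
    unfolding diff_in_means_def right_diff_distrib[symmetric] abs_mult coefficient
    by (intro mult_left_mono) auto
qed

theorem theorem4:
  fixes X :: "nat \<Rightarrow> real^'p"
    and ns nt :: "nat \<Rightarrow> nat"
    and s :: "nat \<Rightarrow> real"
    and \<gamma> :: real
    and K :: nat
    and Y1 Y0 :: "nat \<Rightarrow> real"
  assumes sizes: "\<And>k. k < K \<Longrightarrow> ns k > 0 \<and> even (ns k)"
    and half: "\<And>k. k < K \<Longrightarrow> nt k = ns k div 2"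
    and s_pos: "\<And>k. k < K \<Longrightarrow> s k > 0"
    and gamma: "\<gamma> \<ge> 0"
    and cov_inv: "\<And>k. k < K \<Longrightarrow> invertible (sample_cov X (cum ns (Suc k)))"
    and terminates: "lossless_spmf (seqpsrr X ns nt s \<gamma> K)"
  shows "(\<integral>W. diff_in_means (cum ns K) Y1 Y0 W \<partial>measure_spmf (seqpsrr X ns nt s \<gamma> K))
         = ate (cum ns K) Y1 Y0"
proof (rule integral_measure_spmf_eq_by_symmetry)
  have "ns k = 2 * nt k" if "k < K" for k
    using sizes[OF that] half[OF that] by auto
  then have flip_invariant: "map_spmf (apfst (flip_below (cum ns K))) (seq_psrr X ns nt s \<gamma> K) = seq_psrr X ns nt s \<gamma> K"
    by (rule seq_psrr_flip_below)
  show "map_spmf (flip_below (cum ns K)) (seqpsrr X ns nt s \<gamma> K) = seqpsrr X ns nt s \<gamma> K"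
    unfolding seqpsrr_def by (subst (2) flip_invariant[symmetric]) (simp add: spmf.map_comp o_def)
qed (fact terminates, rule diff_in_means_add_flip_below, rule abs_diff_in_means_le)

end
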